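(* Assume (a) and (b). Then the problem $$\min_{\beta\in\mathbb{R}}\;\lambda\int f^*\!\Big(-\frac{\beta+L_z(\theta)}{\lambda}\Big)dQ(\theta)+\beta$$ is the dual problem of the ERM-$f$DR problem $$\min_{P\in\triangle_Q(\mathcal{M})}R_z(P)+\lambda D_f(P\|Q).$$ Moreover, the duality gap is zero: $$\min_{P\in\triangle_Q(\mathcal{M})}R_z(P)+\lambda D_f(P\|Q)=\max_{\beta\in\mathbb{R}}\Big(-\lambda\int f^*\!\Big(-\frac{\beta+L_z(\theta)}{\lambda}\Big)dQ(\theta)-\beta\Big).$$
   Context: Setting. - $\mathcal{M}\subseteq\mathbb{R}^d$; $h:\mathcal{M}\times\mathcal{X}\to\mathcal{Y}$; the loss $\ell:\mathcal{Y}\times\mathcal{Y}\to[0,\infty)$ satisfies $\ell(y,y)=0$. - For a dataset $z=((x_1,y_1),\dots,(x_n,y_n))$, $L_z(\theta)=\frac1n\sum_i\ell(h(\theta,x_i),y_i)$ and $R_z(P)=\int L_z\,dP$. - $\triangle_Q(\mathcal{M})$ is the set of Borel probability measures on $\mathcal{M}$ absolutely continuous with respect to the Borel probability measure $Q$. Fix $\lambda>0$. - $f:[0,\infty)\to\mathbb{R}$ is convex with $f(1)=0$ and $f(0)=\lim_{x\to0^+}f(x)$; $D_f(P\|Q)=\int f(\frac{dP}{dQ})\,dQ$. - $\dot f$ is the derivative of $f$ on $(0,\infty)$ and $\dot f^{-1}$ its inverse. - $f^*(t)=\sup_x(tx-f(x))$ is the Legendre–Fenchel transform (supremum over the domain of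 $f$). Assumptions. - (a) $f$ is strictly convex and differentiable. - (b) There exists $\beta\in\mathbb{R}$ with $\dot f^{-1}\big(-\frac{\beta+L_z(\theta)}{\lambda}\big)>0$ for all $\theta\in\operatorname{supp}Q$ and $\int\dot f^{-1}\big(-\frac{\beta+L_z(\theta)}{\lambda}\big)dQ(\theta)=1$. *)

theory Defs
  imports "HOL-Probability.Probability"
begin

definition strictly_convex_on :: "real set \<Rightarrow> (real \<Rightarrow> real) \<Rightarrow> bool" where
  "strictly_convex_on A f \<longleftrightarrow> convex A \<and>
     (\<forall>x\<in>A. \<forall>y\<in>A. \<forall>u::real. x \<noteq> y \<longrightarrow> 0 < u \<longrightarrow> u < 1 \<longrightarrow>
        f (u * x + (1 - u) * y) < u * f x + (1 - u) * f y)"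

definition emp_risk :: "('m \<Rightarrow> 'x \<Rightarrow> 'y) \<Rightarrow> ('y \<Rightarrow> 'y \<Rightarrow> real) \<Rightarrow> ('x \<times> 'y) list \<Rightarrow> 'm \<Rightarrow> real" where
  "emp_risk h loss z \<theta> = (\<Sum>(x, y) \<leftarrow> z. loss (h \<theta> x) y) / real (length z)"

text \<open>Lebesgue integral of an extended-real valued function, taking values in [-inf, inf]
  (positive part minus negative part; used only where the negative part is finite).\<close>
definition ext_integral :: "'a measure \<Rightarrow> ('a \<Rightarrow> ereal) \<Rightarrow> ereal" where
  "ext_integral M u =
     enn2ereal (\<integral>\<^sup>+ x. e2ennreal (max 0 (u x)) \<partial>M)
     - enn2ereal (\<integral>\<^sup>+ x. e2ennreal (max 0 (- u x)) \<partial>M)"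

definition fconj :: "(real \<Rightarrow> real) \<Rightarrow> real \<Rightarrow> ereal" where
  "fconj f t = (SUP x\<in>{0..}. ereal (t * x - f x))"

definition f_div :: "(real \<Rightarrow> real) \<Rightarrow> 'a measure \<Rightarrow> 'a measure \<Rightarrow> ereal" where
  "f_div f P Q = ext_integral Q (\<lambda>\<theta>. ereal (f (enn2real (RN_deriv Q P \<theta>))))"

definition exp_risk :: "('a \<Rightarrow> real) \<Rightarrow> 'a measure \<Rightarrow> ereal" where
  "exp_risk L P = ext_integral P (\<lambda>\<theta>. ereal (L \<theta>))"

definition abs_cont_probs :: "'a measure \<Rightarrow> 'a measure set" where
  "abs_cont_probs Q = {P. sets P = sets Q \<and> prob_space P \<and> absolutely_continuous Q P}"

definition erm_fdr_obj :: "('a \<Rightarrow> real) \<Rightarrow> (real \<Rightarrow> real) \<Rightarrow> real \<Rightarrow> 'a measure \<Rightarrow> 'a measure \<Rightarrow> ereal" where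
  "erm_fdr_obj L f lam Q P = exp_risk L P + ereal lam * f_div f P Q"

definition dual_obj :: "('a \<Rightarrow> real) \<Rightarrow> (real \<Rightarrow> real) \<Rightarrow> real \<Rightarrow> 'a measure \<Rightarrow> real \<Rightarrow> ereal" where
  "dual_obj L f lam Q \<beta> =
     - (ereal lam * ext_integral Q (\<lambda>\<theta>. fconj f (- (\<beta> + L \<theta>) / lam))) - ereal \<beta>"

text \<open>Lagrangian of ERM-fDR relaxed to nonnegative densities g = dP/dQ, with multiplier beta
  for the normalisation constraint int g dQ = 1.\<close>
definition lagrangian :: "('a \<Rightarrow> real) \<Rightarrow> (real \<Rightarrow> real) \<Rightarrow> real \<Rightarrow> 'a measure \<Rightarrow> ('a \<Rightarrow> real) \<Rightarrow> real \<Rightarrow> ereal" where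
  "lagrangian L f lam Q g \<beta> =
     ext_integral Q (\<lambda>\<theta>. ereal (L \<theta> * g \<theta>))
     + ereal lam * ext_integral Q (\<lambda>\<theta>. ereal (f (g \<theta>)))
     + ereal (\<beta> * ((\<integral>\<theta>. g \<theta> \<partial>Q) - 1))"

definition msupport :: "('a::topological_space) measure \<Rightarrow> 'a set" where
  "msupport Q = {\<theta>\<in>space Q. \<forall>U. open U \<longrightarrow> \<theta> \<in> U \<longrightarrow> 0 < emeasure Q (U \<inter> space Q)}"

end

theory Submission
  imports Defs
begin

(*
  Weak duality is the Fenchel-Young inequality f*(t) >= t y - f y, taken pointwise at
  t = -(beta + L)/lam and y = g(theta) and integrated against Q: the dual objective at beta
  lies below the Lagrangian of every nonnegative density g.  Conversely, the maximisers of
  t y - f y over y in [0, N] give bounded densities whose integrated conjugate values increase,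
  by monotone convergence, to the dual objective; hence the dual objective is the infimum of
  the Lagrangian.  Assumption (b) supplies beta and the density g* = (f')^-1 (-(beta + L)/lam),
  at which the tangent inequality turns Fenchel-Young into an equality.  As g* integrates to 1,
  the measure g* Q is feasible and its risk equals the dual value at beta; weak duality then
  makes g* Q primal optimal and beta dual optimal.
*)

lemma e2ennreal_max_0_ereal: "e2ennreal (max 0 (ereal y)) = ennreal y"
  by (metis ennreal.abs_eq sup_max)

lemma ext_integral_ereal:
  "ext_integral M (\<lambda>x. ereal (u x)) =
     enn2ereal (\<integral>\<^sup>+ x. ennreal (u x) \<partial>M) - enn2ereal (\<integral>\<^sup>+ x. ennreal (- u x) \<partial>M)"
  by (simp add: ext_integral_def e2ennreal_max_0_ereal)

lemma ext_integral_nonneg: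
  assumes "\<And>x. 0 \<le> u x"
  shows "ext_integral M (\<lambda>x. ereal (u x)) = enn2ereal (\<integral>\<^sup>+ x. ennreal (u x) \<partial>M)"
  unfolding ext_integral_ereal using assms by (simp add: ennreal_neg zero_ennreal.rep_eq)

lemma ext_integral_cong_AE:
  assumes "AE x in M. u x = v x"
  shows "ext_integral M u = ext_integral M v"
proof -
  have "(\<integral>\<^sup>+ x. e2ennreal (max 0 (u x)) \<partial>M) = (\<integral>\<^sup>+ x. e2ennreal (max 0 (v x)) \<partial>M)"
    "(\<integral>\<^sup>+ x. e2ennreal (max 0 (- u x)) \<partial>M) = (\<integral>\<^sup>+ x. e2ennreal (max 0 (- v x)) \<partial>M)"
    by (rule nn_integral_cong_AE, use assms in eventually_elim, simp)+
  then show ?thesis unfolding ext_integral_def by simp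
qed

lemma ext_integral_ereal_bounded_below:
  assumes u: "u \<in> borel_measurable M" and k: "integrable M k" and le: "AE x in M. k x \<le> u x"
  shows "ext_integral M (\<lambda>x. ereal (u x)) = (if integrable M u then ereal (integral\<^sup>L M u) else \<infinity>)"
proof -
  have "(\<integral>\<^sup>+ x. ennreal (- u x) \<partial>M) \<le> (\<integral>\<^sup>+ x. ennreal (- k x) \<partial>M)"
    by (rule nn_integral_mono_AE) (use le in eventually_elim, auto intro: ennreal_leI)
  moreover have "(\<integral>\<^sup>+ x. ennreal (- k x) \<partial>M) \<noteq> \<infinity>"
    using k by (simp add: real_integrable_def)
  ultimately have neg: "(\<integral>\<^sup>+ x. ennreal (- u x) \<partial>M) \<noteq> \<infinity>"
    by (auto simp: top_unique)
  show ?thesis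
  proof (cases "integrable M u")
    case True
    then have "(\<integral>\<^sup>+ x. ennreal (u x) \<partial>M) \<noteq> \<infinity>" by (simp add: real_integrable_def)
    then show ?thesis using True neg unfolding ext_integral_ereal real_lebesgue_integral_def[OF True]
      by (cases "\<integral>\<^sup>+ x. ennreal (u x) \<partial>M"; cases "\<integral>\<^sup>+ x. ennreal (- u x) \<partial>M") auto
  next
    case False
    then have "(\<integral>\<^sup>+ x. ennreal (u x) \<partial>M) = \<infinity>" using u neg by (simp add: real_integrable_def)
    then show ?thesis using False neg unfolding ext_integral_ereal
      by (cases "\<integral>\<^sup>+ x. ennreal (- u x) \<partial>M") auto
  qed
qed

lemma integral_le_ext_integral:
  assumes k: "integrable M k" and le: "AE x in M. ereal (k x) \<le> u x"
  shows "ereal (integral\<^sup>L M k) \<le> ext_integral M u"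
proof -
  have neg_le: "- u x \<le> ereal (- k x)" if "ereal (k x) \<le> u x" for x
    using that by (cases "u x") auto
  have "ereal (integral\<^sup>L M k) = ext_integral M (\<lambda>x. ereal (k x))"
    using ext_integral_ereal_bounded_below[OF borel_measurable_integrable[OF k] k] k by simp
  also have "\<dots> \<le> ext_integral M u"
    unfolding ext_integral_def
  proof (rule ereal_minus_mono)
    show "enn2ereal (\<integral>\<^sup>+ x. e2ennreal (max 0 (ereal (k x))) \<partial>M) \<le>
        enn2ereal (\<integral>\<^sup>+ x. e2ennreal (max 0 (u x)) \<partial>M)"
      unfolding less_eq_ennreal.rep_eq[symmetric]
      by (rule nn_integral_mono_AE) (use le in eventually_elim, auto intro!: e2ennreal_mono max.mono)
    show "enn2ereal (\<integral>\<^sup>+ x. e2ennreal (max 0 (- u x)) \<partial>M) \<le>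
        enn2ereal (\<integral>\<^sup>+ x. e2ennreal (max 0 (- ereal (k x))) \<partial>M)"
      unfolding less_eq_ennreal.rep_eq[symmetric]
      by (rule nn_integral_mono_AE) (use le in eventually_elim, auto intro!: e2ennreal_mono max.mono neg_le)
  qed
  finally show ?thesis .
qed

lemma e2ennreal_max_0_shift:
  assumes low: "ereal (- c) \<le> a" and c0: "0 \<le> c"
  shows "e2ennreal (max 0 a) + ennreal c = e2ennreal (a + ereal c) + e2ennreal (max 0 (- a))"
proof (cases a)
  case (real r)
  with low have rc: "- c \<le> r" by simp
  have "ennreal r + ennreal c = ennreal (r + c) + ennreal (- r)"
  proof (cases "0 \<le> r")
    case True
    then show ?thesis using c0 by (simp add: ennreal_plus ennreal_neg)
  next
    case False
    then show ?thesis using rc by (simp add: ennreal_plus[symmetric] ennreal_neg)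
  qed
  then show ?thesis
    using real e2ennreal_max_0_ereal[of r] e2ennreal_max_0_ereal[of "- r"] by simp
qed (use low in simp_all)

lemma e2ennreal_SUP_add_le:
  fixes h :: "nat \<Rightarrow> real"
  assumes "\<And>n. - c \<le> h n"
  shows "e2ennreal ((SUP n. ereal (h n)) + ereal c) \<le> (SUP n. ennreal (h n + c))"
proof -
  have "(SUP n. ereal (h n)) + ereal c = (SUP n. ereal (h n) + ereal c)"
    using SUP_ereal_add_left[of UNIV "ereal c" "\<lambda>n. ereal (h n)"] by simp
  also have "\<dots> \<le> enn2ereal (SUP n. ennreal (h n + c))"
  proof (rule SUP_least)
    fix n
    have "ereal (h n) + ereal c = enn2ereal (ennreal (h n + c))"
      using assms[of n] by (simp add: enn2ereal_ennreal)
    also have "\<dots> \<le> enn2ereal (SUP n. ennreal (h n + c))"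
      unfolding less_eq_ennreal.rep_eq[symmetric] by (rule SUP_upper) auto
    finally show "ereal (h n) + ereal c \<le> enn2ereal (SUP n. ennreal (h n + c))" .
  qed
  finally show ?thesis by (metis e2ennreal_enn2ereal e2ennreal_mono)
qed

lemma (in prob_space) nn_integral_shift_eq_integral:
  assumes h: "integrable M h" and low: "\<And>x. x \<in> space M \<Longrightarrow> - c \<le> h x"
  shows "(\<integral>\<^sup>+ x. ennreal (h x + c) \<partial>M) = ennreal (integral\<^sup>L M h + c)"
proof -
  have h_c: "integrable M (\<lambda>x. h x + c)" using h by auto
  have "(\<integral>\<^sup>+ x. ennreal (h x + c) \<partial>M) = ennreal (\<integral>x. h x + c \<partial>M)"
  proof (rule nn_integral_eq_integral[OF h_c], rule AE_I2)
    fix x assume "x \<in> space M"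
    from low[OF this] show "0 \<le> h x + c" by simp
  qed
  also have "(\<integral>x. h x + c \<partial>M) = integral\<^sup>L M h + c"
    using h by (simp add: prob_space)
  finally show ?thesis .
qed

lemma (in prob_space) ext_integral_eq_shifted_nn_integral:
  assumes c0: "0 \<le> c" and u_meas: "u \<in> borel_measurable M"
    and u_low: "\<And>x. x \<in> space M \<Longrightarrow> ereal (- c) \<le> u x"
  shows "ext_integral M u = enn2ereal (\<integral>\<^sup>+ x. e2ennreal (u x + ereal c) \<partial>M) - ereal c"
proof -
  define pos where "pos = (\<integral>\<^sup>+ x. e2ennreal (max 0 (u x)) \<partial>M)"
  define neg where "neg = (\<integral>\<^sup>+ x. e2ennreal (max 0 (- u x)) \<partial>M)"
  define S where "S = (\<integral>\<^sup>+ x. e2ennreal (u x + ereal c) \<partial>M)"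
  have e2m: "(\<lambda>x. e2ennreal (v x)) \<in> borel_measurable M" if "v \<in> borel_measurable M" for v :: "_ \<Rightarrow> ereal"
    using measurable_compose[OF that measurable_e2ennreal] by simp
  have "pos + ennreal c = (\<integral>\<^sup>+ x. e2ennreal (max 0 (u x)) + ennreal c \<partial>M)"
    unfolding pos_def using u_meas by (subst nn_integral_add) (auto intro!: e2m simp: emeasure_space_1)
  also have "\<dots> = (\<integral>\<^sup>+ x. e2ennreal (u x + ereal c) + e2ennreal (max 0 (- u x)) \<partial>M)"
  proof (rule nn_integral_cong)
    fix x assume "x \<in> space M"
    then show "e2ennreal (max 0 (u x)) + ennreal c = e2ennreal (u x + ereal c) + e2ennreal (max 0 (- u x))"
      by (rule e2ennreal_max_0_shift[OF u_low c0])
  qed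
  also have "\<dots> = S + neg"
    unfolding S_def neg_def using u_meas by (subst nn_integral_add) (auto intro!: e2m)
  finally have "enn2ereal (pos + ennreal c) = enn2ereal (S + neg)" by simp
  then have sum_eq: "enn2ereal pos + ereal c = enn2ereal S + enn2ereal neg"
    using c0 by (simp add: plus_ennreal.rep_eq enn2ereal_ennreal)
  have "neg \<le> (\<integral>\<^sup>+ x. ennreal c \<partial>M)"
    unfolding neg_def
  proof (rule nn_integral_mono)
    fix x assume "x \<in> space M"
    then have "max 0 (- u x) \<le> ereal c" using u_low[of x] c0 by (cases "u x") auto
    then show "e2ennreal (max 0 (- u x)) \<le> ennreal c"
      using e2ennreal_mono by fastforce
  qed
  then have "enn2ereal neg \<le> ereal c"
    using c0 by (simp add: emeasure_space_1 less_eq_ennreal.rep_eq enn2ereal_ennreal)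
  moreover have "0 \<le> enn2ereal neg" by (rule enn2ereal_nonneg)
  ultimately obtain q where "enn2ereal neg = ereal q" by (cases "enn2ereal neg") auto
  with sum_eq show ?thesis
    unfolding ext_integral_def pos_def[symmetric] neg_def[symmetric] S_def[symmetric]
    by (cases "enn2ereal pos"; cases "enn2ereal S") auto
qed

lemma (in prob_space) ext_integral_SUP_le:
  assumes c0: "0 \<le> c"
    and h_int: "\<And>n. integrable M (h n)"
    and h_mono: "\<And>n x. x \<in> space M \<Longrightarrow> h n x \<le> h (Suc n) x"
    and h_low: "\<And>n x. x \<in> space M \<Longrightarrow> - c \<le> h n x"
    and h_K: "\<And>n. integral\<^sup>L M (h n) \<le> K"
  shows "ext_integral M (\<lambda>x. SUP n. ereal (h n x)) \<le> ereal K"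
proof -
  define u where "u = (\<lambda>x. SUP n. ereal (h n x))"
  have u_meas: "u \<in> borel_measurable M"
    unfolding u_def using h_int by (intro borel_measurable_SUP) auto
  have u_low: "ereal (- c) \<le> u x" if "x \<in> space M" for x
    unfolding u_def using h_low[OF that, of 0] by (auto intro: SUP_upper2)
  have "(\<integral>\<^sup>+ x. e2ennreal (u x + ereal c) \<partial>M) \<le> (\<integral>\<^sup>+ x. (SUP n. ennreal (h n x + c)) \<partial>M)"
    unfolding u_def using h_low by (intro nn_integral_mono e2ennreal_SUP_add_le) auto
  also have "\<dots> = (SUP n. \<integral>\<^sup>+ x. ennreal (h n x + c) \<partial>M)"
    using h_mono h_int by (intro nn_integral_monotone_convergence_SUP_AE) (auto intro!: AE_I2 ennreal_leI)
  also have "\<dots> \<le> ennreal (K + c)"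
    using h_K by (auto simp: nn_integral_shift_eq_integral[OF h_int h_low] intro!: SUP_least ennreal_leI)
  finally have S_le: "(\<integral>\<^sup>+ x. e2ennreal (u x + ereal c) \<partial>M) \<le> ennreal (K + c)" .
  have "- c \<le> integral\<^sup>L M (h 0)"
    using h_low by (intro integral_ge_const h_int) (auto intro!: AE_I2)
  with h_K[of 0] have "0 \<le> K + c" by linarith
  with S_le have "enn2ereal (\<integral>\<^sup>+ x. e2ennreal (u x + ereal c) \<partial>M) \<le> ereal (K + c)"
    by (metis enn2ereal_ennreal less_eq_ennreal.rep_eq)
  moreover have "ext_integral M u = enn2ereal (\<integral>\<^sup>+ x. e2ennreal (u x + ereal c) \<partial>M) - ereal c"
    by (rule ext_integral_eq_shifted_nn_integral[OF c0 u_meas u_low])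
  ultimately have "ext_integral M u \<le> ereal K"
    by (cases "enn2ereal (\<integral>\<^sup>+ x. e2ennreal (u x + ereal c) \<partial>M)") auto
  then show ?thesis by (simp add: u_def)
qed

lemma AE_in_msupport:
  fixes Q :: "'a::second_countable_topology measure"
  assumes sets: "sets Q = sets (restrict_space borel (space Q))"
  shows "AE x in Q. x \<in> msupport Q"
proof -
  obtain B :: "'a set set" where B: "countable B" "topological_basis B"
    using ex_countable_basis by blast
  define N where "N = {b \<in> B. emeasure Q (b \<inter> space Q) = 0}"
  have meas: "U \<inter> space Q \<in> sets Q" if "open U" for U
    using that unfolding sets sets_restrict_space by auto
  have "(\<Union>b\<in>N. b \<inter> space Q) \<in> null_sets Q"
    using B meas topological_basis_open[OF B(2)]
    by (intro null_sets_UN') (auto simp: N_def intro: countable_subset[of N B])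
  then show ?thesis
  proof (rule AE_I', safe)
    fix x assume x: "x \<in> space Q" and "x \<notin> msupport Q"
    then obtain U where U: "open U" "x \<in> U" "emeasure Q (U \<inter> space Q) = 0"
      unfolding msupport_def by (auto simp: not_gr_zero)
    obtain b where b: "b \<in> B" "x \<in> b" "b \<subseteq> U"
      using topological_basisE[OF B(2) U(1,2)] by blast
    have "emeasure Q (b \<inter> space Q) \<le> emeasure Q (U \<inter> space Q)"
      using b meas[OF U(1)] by (intro emeasure_mono) auto
    with U(3) b(1) have "b \<in> N" unfolding N_def by simp
    with b(2) x show "x \<in> (\<Union>b\<in>N. b \<inter> space Q)" by auto
  qed
qed

lemma density_mem_abs_cont_probs:
  assumes g: "integrable M g" and nonneg: "\<And>x. 0 \<le> g x" and norm: "integral\<^sup>L M g = 1"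
  shows "density M (\<lambda>x. ennreal (g x)) \<in> abs_cont_probs M"
  unfolding abs_cont_probs_def
proof (intro CollectI conjI)
  have g_meas: "(\<lambda>x. ennreal (g x)) \<in> borel_measurable M" using g by auto
  show "absolutely_continuous M (density M (\<lambda>x. ennreal (g x)))"
    by (rule absolutely_continuousI_density[OF g_meas])
  have "emeasure (density M (\<lambda>x. ennreal (g x))) (space M) = (\<integral>\<^sup>+ x. ennreal (g x) * indicator (space M) x \<partial>M)"
    by (simp add: emeasure_density[OF g_meas])
  also have "\<dots> = (\<integral>\<^sup>+ x. ennreal (g x) \<partial>M)"
    by (rule nn_integral_cong) simp
  also have "\<dots> = 1"
    using nn_integral_eq_integral[OF g] nonneg norm by simp
  finally show "prob_space (density M (\<lambda>x. ennreal (g x)))"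
    by (intro prob_spaceI) simp
qed simp

lemma emp_risk_nonneg:
  assumes "\<And>y y'. 0 \<le> loss y y'"
  shows "0 \<le> emp_risk h loss z \<theta>"
  unfolding emp_risk_def using assms by (auto intro!: divide_nonneg_nonneg sum_list_nonneg)

lemma fenchel_young:
  assumes "0 \<le> x"
  shows "ereal (t * x - f x) \<le> fconj f t"
  unfolding fconj_def using assms by (intro SUP_upper) auto

locale divergence_generator =
  fixes f :: "real \<Rightarrow> real"
  assumes convex: "convex_on {0..} f"
    and continuous_at_0: "(f \<longlongrightarrow> f 0) (at_right 0)"
    and differentiable: "\<And>x. 0 < x \<Longrightarrow> f differentiable (at x)"
begin

lemma continuous_on_nonneg: "continuous_on {0..} f"
proof (rule continuous_on_eq_continuous_within[THEN iffD2], intro ballI)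
  fix x :: real assume "x \<in> {0..}"
  then consider "x = 0" | "0 < x" by fastforce
  then show "continuous (at x within {0..}) f"
  proof cases
    case 1
    then show ?thesis using continuous_at_0 by (simp add: continuous_within at_within_Ici_at_right)
  next
    case 2
    then show ?thesis
      using differentiable differentiable_imp_continuous_within continuous_at_imp_continuous_at_within
      by blast
  qed
qed

lemma above_tangent:
  assumes "0 < y" and "0 \<le> x"
  shows "deriv f y * (x - y) \<le> f x - f y"
proof (rule convex_on_imp_above_tangent[OF convex])
  have "(f has_real_derivative deriv f y) (at y)"
    using differentiable[OF \<open>0 < y\<close>] DERIV_deriv_iff_real_differentiable by blast
  then show "(f has_real_derivative deriv f y) (at y within {0..})"
    by (rule has_field_derivative_at_within)
qed (use assms in auto)

lemma borel_measurable_comp: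
  assumes g: "g \<in> borel_measurable M" and nonneg: "\<And>x. x \<in> space M \<Longrightarrow> 0 \<le> g x"
  shows "(\<lambda>x. f (g x)) \<in> borel_measurable M"
proof -
  have "continuous_on UNIV (\<lambda>x. f (max 0 x))"
    by (rule continuous_on_compose2[OF continuous_on_nonneg]) (auto intro: continuous_intros)
  then have "(\<lambda>x. f (max 0 (g x))) \<in> borel_measurable M"
    using borel_measurable_continuous_on[OF _ g] by blast
  then show ?thesis by (rule measurable_cong[THEN iffD1, rotated]) (use nonneg in auto)
qed

lemma inj_on_deriv:
  assumes strict: "strictly_convex_on {0..} f"
  shows "inj_on (deriv f) {0<..}"
proof -
  have False if ab: "0 < a" "a < b" and eq: "deriv f a = deriv f b" for a b
  proof -
    define m where "m = (a + b) / 2"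
    have "f b - f a = deriv f a * (b - a)"
      using above_tangent[of a b] above_tangent[of b a] ab eq by (simp add: algebra_simps)
    moreover have "deriv f a * (m - a) \<le> f m - f a"
      using above_tangent[of a m] ab unfolding m_def by simp
    moreover have "f m < (f a + f b) / 2"
    proof -
      have "\<forall>x\<in>{0..}. \<forall>y\<in>{0..}. \<forall>u::real. x \<noteq> y \<longrightarrow> 0 < u \<longrightarrow> u < 1 \<longrightarrow>
          f (u * x + (1 - u) * y) < u * f x + (1 - u) * f y"
        using strict unfolding strictly_convex_on_def by blast
      from this[rule_format, of a b "1/2"] ab
      have "f ((1/2) * a + (1 - 1/2) * b) < (1/2) * f a + (1 - 1/2) * f b" by simp
      moreover have "(1/2) * a + (1 - 1/2) * b = m" unfolding m_def by simp
      ultimately show ?thesis by simp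
    qed
    ultimately show False unfolding m_def by (simp add: field_simps)
  qed
  then show ?thesis
    by (intro inj_onI) (metis greaterThan_iff linorder_neqE_linordered_idom)
qed

lemma fconj_eq_at_deriv:
  assumes "0 < y" and "deriv f y = t"
  shows "fconj f t = ereal (t * y - f y)"
proof (rule antisym)
  show "fconj f t \<le> ereal (t * y - f y)"
    unfolding fconj_def
  proof (rule SUP_least)
    fix x :: real assume "x \<in> {0..}"
    then have "t * (x - y) \<le> f x - f y" using above_tangent[of y x] assms by simp
    then show "ereal (t * x - f x) \<le> ereal (t * y - f y)" by (simp add: algebra_simps)
  qed
  show "ereal (t * y - f y) \<le> fconj f t" using assms by (intro fenchel_young) simp
qed

definition conj_argmax :: "nat \<Rightarrow> real \<Rightarrow> real" where
  "conj_argmax N t = (SOME x. x \<in> {0..real N} \<and> (\<forall>y\<in>{0..real N}. t * y - f y \<le> t * x - f x))"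

lemma conj_argmax:
  "conj_argmax N t \<in> {0..real N}"
  "y \<in> {0..real N} \<Longrightarrow> t * y - f y \<le> t * conj_argmax N t - f (conj_argmax N t)"
proof -
  have "continuous_on {0..real N} (\<lambda>y. t * y - f y)"
    by (intro continuous_intros continuous_on_subset[OF continuous_on_nonneg]) auto
  then have "\<exists>x\<in>{0..real N}. \<forall>y\<in>{0..real N}. t * y - f y \<le> t * x - f x"
    by (intro continuous_attains_sup) auto
  then have "conj_argmax N t \<in> {0..real N} \<and>
      (\<forall>y\<in>{0..real N}. t * y - f y \<le> t * conj_argmax N t - f (conj_argmax N t))"
    unfolding conj_argmax_def by - (rule someI_ex, blast)
  then show "conj_argmax N t \<in> {0..real N}"
    "y \<in> {0..real N} \<Longrightarrow> t * y - f y \<le> t * conj_argmax N t - f (conj_argmax N t)"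
    by auto
qed

lemma mono_conj_argmax: "mono (conj_argmax N)"
proof (rule monoI)
  fix t1 t2 :: real assume "t1 \<le> t2"
  have "t1 * conj_argmax N t2 - f (conj_argmax N t2) \<le> t1 * conj_argmax N t1 - f (conj_argmax N t1)"
    "t2 * conj_argmax N t1 - f (conj_argmax N t1) \<le> t2 * conj_argmax N t2 - f (conj_argmax N t2)"
    by (rule conj_argmax(2)[OF conj_argmax(1)])+
  then have "0 \<le> (t2 - t1) * (conj_argmax N t2 - conj_argmax N t1)"
    by (simp add: algebra_simps)
  then show "conj_argmax N t1 \<le> conj_argmax N t2"
    using \<open>t1 \<le> t2\<close> by (cases "t1 = t2") (auto simp: zero_le_mult_iff)
qed

lemma fconj_eq_SUP_conj_argmax:
  "fconj f t = (SUP N. ereal (t * conj_argmax N t - f (conj_argmax N t)))"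
  unfolding fconj_def
proof (rule antisym; rule SUP_least)
  fix x :: real assume "x \<in> {0..}"
  then have "x \<in> {0..real (nat \<lceil>x\<rceil>)}" by (auto intro: real_nat_ceiling_ge)
  then have "ereal (t * x - f x) \<le> ereal (t * conj_argmax (nat \<lceil>x\<rceil>) t - f (conj_argmax (nat \<lceil>x\<rceil>) t))"
    using conj_argmax(2) by simp
  then show "ereal (t * x - f x) \<le> (SUP N. ereal (t * conj_argmax N t - f (conj_argmax N t)))"
    by (rule SUP_upper2[rotated]) simp
next
  fix N
  show "ereal (t * conj_argmax N t - f (conj_argmax N t)) \<le> (SUP x\<in>{0..}. ereal (t * x - f x))"
    using conj_argmax(1)[of N t] by (intro SUP_upper) auto
qed

end

locale erm_fdr = divergence_generator f + Q: prob_space Q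
  for f :: "real \<Rightarrow> real" and Q :: "'a measure" +
  fixes L :: "'a \<Rightarrow> real" and lam :: real
  assumes L_meas: "L \<in> borel_measurable Q"
    and L_nonneg: "\<And>x. 0 \<le> L x"
    and lam_pos: "0 < lam"
begin

definition conj_minorant :: "real \<Rightarrow> ('a \<Rightarrow> real) \<Rightarrow> 'a \<Rightarrow> real" where
  "conj_minorant \<beta> g x = - (\<beta> + L x) / lam * g x - f (g x)"

lemma conj_minorant_le_fconj:
  "0 \<le> g x \<Longrightarrow> ereal (conj_minorant \<beta> g x) \<le> fconj f (- (\<beta> + L x) / lam)"
  unfolding conj_minorant_def by (rule fenchel_young)

lemma lagrangian_terms_bounds:
  assumes "0 \<le> g x" and "- f 0 \<le> conj_minorant \<beta> g x"
  shows "0 \<le> L x * g x" and "L x * g x \<le> lam * (f 0 - f (g x)) - \<beta> * g x"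
    and "f (g x) \<le> f 0 - \<beta> * g x / lam"
proof -
  show L_g: "0 \<le> L x * g x" using L_nonneg assms(1) by simp
  have "lam * (- f 0) \<le> lam * conj_minorant \<beta> g x"
    using assms(2) lam_pos by (intro mult_left_mono) auto
  moreover have "lam * conj_minorant \<beta> g x = - (\<beta> + L x) * g x - lam * f (g x)"
    unfolding conj_minorant_def using lam_pos by (simp add: field_simps)
  ultimately show upper: "L x * g x \<le> lam * (f 0 - f (g x)) - \<beta> * g x"
    by (simp add: algebra_simps)
  from L_g upper have "lam * f (g x) \<le> lam * f 0 - \<beta> * g x"
    by (simp add: algebra_simps)
  then have "lam * f (g x) \<le> lam * (f 0 - \<beta> * g x / lam)"
    using lam_pos by (simp add: right_diff_distrib)
  then show "f (g x) \<le> f 0 - \<beta> * g x / lam"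
    using lam_pos by simp
qed

lemma integrable_lagrangian_terms:
  assumes g: "integrable Q g" and nonneg: "\<And>x. x \<in> space Q \<Longrightarrow> 0 \<le> g x"
    and low: "AE x in Q. - f 0 \<le> conj_minorant \<beta> g x"
  shows "integrable Q (\<lambda>x. f (g x))" and "integrable Q (\<lambda>x. L x * g x)"
proof -
  define lin where "lin x = f 1 + deriv f 1 * (g x - 1)" for x
  have lin_int: "integrable Q lin"
    unfolding lin_def using g by auto
  have bounds: "AE x in Q. \<bar>f (g x)\<bar> \<le> \<bar>lin x\<bar> + \<bar>f 0 - \<beta> * g x / lam\<bar> \<and>
      \<bar>L x * g x\<bar> \<le> \<bar>lam * (f 0 - lin x) - \<beta> * g x\<bar>"
    using AE_space low
  proof eventually_elim
    case (elim x)
    then have "lin x \<le> f (g x)"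
      unfolding lin_def using above_tangent[of 1 "g x"] nonneg by simp
    moreover have "lam * lin x \<le> lam * f (g x)"
      using \<open>lin x \<le> f (g x)\<close> lam_pos by simp
    ultimately show ?case
      using lagrangian_terms_bounds[of g x \<beta>] nonneg elim by (auto simp: algebra_simps)
  qed
  have g_meas: "g \<in> borel_measurable Q" using g by auto
  show "integrable Q (\<lambda>x. f (g x))"
  proof (rule Bochner_Integration.integrable_bound)
    show "integrable Q (\<lambda>x. \<bar>lin x\<bar> + \<bar>f 0 - \<beta> * g x / lam\<bar>)" using lin_int g by auto
    show "(\<lambda>x. f (g x)) \<in> borel_measurable Q" by (rule borel_measurable_comp[OF g_meas nonneg])
  qed (use bounds in \<open>eventually_elim, auto\<close>)
  show "integrable Q (\<lambda>x. L x * g x)"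
  proof (rule Bochner_Integration.integrable_bound)
    show "integrable Q (\<lambda>x. lam * (f 0 - lin x) - \<beta> * g x)" using lin_int g by auto
    show "(\<lambda>x. L x * g x) \<in> borel_measurable Q" using L_meas g_meas by measurable
  qed (use bounds in \<open>eventually_elim, auto\<close>)
qed

lemma integral_conj_minorant:
  assumes "integrable Q g" "integrable Q (\<lambda>x. L x * g x)" "integrable Q (\<lambda>x. f (g x))"
  shows "integrable Q (conj_minorant \<beta> g)"
    and "lam * (\<integral>x. conj_minorant \<beta> g x \<partial>Q) =
      - \<beta> * integral\<^sup>L Q g - (\<integral>x. L x * g x \<partial>Q) - lam * (\<integral>x. f (g x) \<partial>Q)"
proof -
  have eq: "conj_minorant \<beta> g = (\<lambda>x. (- \<beta> * g x - L x * g x) / lam - f (g x))"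
    unfolding conj_minorant_def using lam_pos by (auto simp: field_simps)
  show "integrable Q (conj_minorant \<beta> g)"
    unfolding eq using assms by auto
  show "lam * (\<integral>x. conj_minorant \<beta> g x \<partial>Q) =
      - \<beta> * integral\<^sup>L Q g - (\<integral>x. L x * g x \<partial>Q) - lam * (\<integral>x. f (g x) \<partial>Q)"
    unfolding eq using assms lam_pos by (simp add: field_simps)
qed

lemma lagrangian_eq_conj_minorant:
  assumes g: "integrable Q g" and nonneg: "\<And>x. x \<in> space Q \<Longrightarrow> 0 \<le> g x"
  shows "lagrangian L f lam Q g \<beta> =
    (if integrable Q (\<lambda>x. L x * g x) \<and> integrable Q (\<lambda>x. f (g x))
     then ereal (- lam * (\<integral>x. conj_minorant \<beta> g x \<partial>Q) - \<beta>) else \<infinity>)"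
proof -
  have g_meas: "g \<in> borel_measurable Q" using g by auto
  have L_g: "ext_integral Q (\<lambda>x. ereal (L x * g x)) =
      (if integrable Q (\<lambda>x. L x * g x) then ereal (\<integral>x. L x * g x \<partial>Q) else \<infinity>)"
    by (rule ext_integral_ereal_bounded_below[where k = "\<lambda>_. 0"])
       (use L_meas g_meas nonneg L_nonneg in \<open>auto intro!: AE_I2\<close>)
  have f_g: "ext_integral Q (\<lambda>x. ereal (f (g x))) =
      (if integrable Q (\<lambda>x. f (g x)) then ereal (\<integral>x. f (g x) \<partial>Q) else \<infinity>)"
  proof (rule ext_integral_ereal_bounded_below[where k = "\<lambda>x. f 1 + deriv f 1 * (g x - 1)"])
    show "(\<lambda>x. f (g x)) \<in> borel_measurable Q" by (rule borel_measurable_comp[OF g_meas nonneg])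
    show "integrable Q (\<lambda>x. f 1 + deriv f 1 * (g x - 1))" using g by auto
    show "AE x in Q. f 1 + deriv f 1 * (g x - 1) \<le> f (g x)"
      using above_tangent[of 1] nonneg by (intro AE_I2) force
  qed
  show ?thesis
  proof (cases "integrable Q (\<lambda>x. L x * g x) \<and> integrable Q (\<lambda>x. f (g x))")
    case True
    then have "- lam * (\<integral>x. conj_minorant \<beta> g x \<partial>Q) - \<beta> =
        (\<integral>x. L x * g x \<partial>Q) + lam * (\<integral>x. f (g x) \<partial>Q) + \<beta> * (integral\<^sup>L Q g - 1)"
      using integral_conj_minorant(2)[OF g, of \<beta>] by (simp add: algebra_simps)
    then show ?thesis
      using True unfolding lagrangian_def L_g f_g by simp
  qed (use lam_pos in \<open>auto simp: lagrangian_def L_g f_g\<close>)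
qed

lemma dual_obj_le_lagrangian:
  assumes g: "integrable Q g" and nonneg: "\<And>x. x \<in> space Q \<Longrightarrow> 0 \<le> g x"
  shows "dual_obj L f lam Q \<beta> \<le> lagrangian L f lam Q g \<beta>"
proof (cases "integrable Q (\<lambda>x. L x * g x) \<and> integrable Q (\<lambda>x. f (g x))")
  case True
  have "ereal (\<integral>x. conj_minorant \<beta> g x \<partial>Q) \<le> ext_integral Q (\<lambda>x. fconj f (- (\<beta> + L x) / lam))"
    using True g nonneg
    by (intro integral_le_ext_integral integral_conj_minorant(1) AE_I2 conj_minorant_le_fconj) auto
  moreover have "lagrangian L f lam Q g \<beta> = ereal (- lam * (\<integral>x. conj_minorant \<beta> g x \<partial>Q) - \<beta>)"
    using lagrangian_eq_conj_minorant[OF g nonneg, of \<beta>] True by simp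
  ultimately show ?thesis
    using lam_pos unfolding dual_obj_def
    by (cases "ext_integral Q (\<lambda>x. fconj f (- (\<beta> + L x) / lam))") auto
next
  case False
  then show ?thesis using lagrangian_eq_conj_minorant[OF g nonneg, of \<beta>] by auto
qed

definition trunc_density :: "real \<Rightarrow> nat \<Rightarrow> 'a \<Rightarrow> real" where
  "trunc_density \<beta> N x = conj_argmax N (- (\<beta> + L x) / lam)"

lemma trunc_density_nonneg: "0 \<le> trunc_density \<beta> N x"
  using conj_argmax(1) by (simp add: trunc_density_def)

lemma integrable_trunc_density: "integrable Q (trunc_density \<beta> N)"
proof (rule Q.integrable_const_bound[where B = "real N"])
  have "(\<lambda>x. - (\<beta> + L x) / lam) \<in> borel_measurable Q" using L_meas by measurable
  then show "trunc_density \<beta> N \<in> borel_measurable Q"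
    unfolding trunc_density_def[abs_def]
    using measurable_compose borel_measurable_mono[OF mono_conj_argmax] by blast
qed (use conj_argmax(1) in \<open>auto simp: trunc_density_def\<close>)

lemma conj_minorant_trunc_density:
  "- f 0 \<le> conj_minorant \<beta> (trunc_density \<beta> N) x"
  "conj_minorant \<beta> (trunc_density \<beta> N) x \<le> conj_minorant \<beta> (trunc_density \<beta> (Suc N)) x"
proof -
  define t where "t = - (\<beta> + L x) / lam"
  have "conj_argmax N t \<in> {0..real (Suc N)}" using conj_argmax(1)[of N t] by auto
  then show "conj_minorant \<beta> (trunc_density \<beta> N) x \<le> conj_minorant \<beta> (trunc_density \<beta> (Suc N)) x"
    unfolding conj_minorant_def trunc_density_def t_def[symmetric] by (rule conj_argmax(2))
  show "- f 0 \<le> conj_minorant \<beta> (trunc_density \<beta> N) x"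
    unfolding conj_minorant_def trunc_density_def t_def[symmetric] using conj_argmax(2)[of 0 N t] by simp
qed

lemma lagrangian_trunc_density:
  "integrable Q (conj_minorant \<beta> (trunc_density \<beta> N))"
  "lagrangian L f lam Q (trunc_density \<beta> N) \<beta> =
     ereal (- lam * (\<integral>x. conj_minorant \<beta> (trunc_density \<beta> N) x \<partial>Q) - \<beta>)"
proof -
  have "AE x in Q. - f 0 \<le> conj_minorant \<beta> (trunc_density \<beta> N) x"
    by (simp add: conj_minorant_trunc_density(1))
  note terms = integrable_lagrangian_terms[OF integrable_trunc_density trunc_density_nonneg this]
  show "integrable Q (conj_minorant \<beta> (trunc_density \<beta> N))"
    by (rule integral_conj_minorant(1)[OF integrable_trunc_density terms(2,1)])
  show "lagrangian L f lam Q (trunc_density \<beta> N) \<beta> =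
      ereal (- lam * (\<integral>x. conj_minorant \<beta> (trunc_density \<beta> N) x \<partial>Q) - \<beta>)"
    using lagrangian_eq_conj_minorant[OF integrable_trunc_density trunc_density_nonneg] terms by simp
qed

lemma ext_integral_fconj_le:
  assumes "\<And>N. (\<integral>x. conj_minorant \<beta> (trunc_density \<beta> N) x \<partial>Q) \<le> K"
  shows "ext_integral Q (\<lambda>x. fconj f (- (\<beta> + L x) / lam)) \<le> ereal K"
proof -
  have fconj_eq: "fconj f (- (\<beta> + L x) / lam) = (SUP N. ereal (conj_minorant \<beta> (trunc_density \<beta> N) x))" for x
    unfolding conj_minorant_def trunc_density_def by (rule fconj_eq_SUP_conj_argmax)
  show ?thesis
    unfolding fconj_eq
  proof (rule Q.ext_integral_SUP_le[where c = "\<bar>f 0\<bar>"])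
    show "- \<bar>f 0\<bar> \<le> conj_minorant \<beta> (trunc_density \<beta> N) x" for N x
      using conj_minorant_trunc_density(1)[of \<beta> N x] by linarith
  qed (use assms lagrangian_trunc_density(1) conj_minorant_trunc_density(2) in auto)
qed

lemma INF_lagrangian_le_dual_obj:
  "(INF g \<in> {g. g \<in> borel_measurable Q \<and> (\<forall>\<theta>\<in>space Q. g \<theta> \<ge> 0) \<and> integrable Q g}.
      lagrangian L f lam Q g \<beta>) \<le> dual_obj L f lam Q \<beta>"
  (is "?I \<le> _")
proof -
  define E where "E = ext_integral Q (\<lambda>x. fconj f (- (\<beta> + L x) / lam))"
  have I_le: "?I \<le> ereal (- lam * (\<integral>x. conj_minorant \<beta> (trunc_density \<beta> N) x \<partial>Q) - \<beta>)" for N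
  proof -
    have "?I \<le> lagrangian L f lam Q (trunc_density \<beta> N) \<beta>"
      using integrable_trunc_density trunc_density_nonneg by (intro INF_lower) auto
    also have "\<dots> = ereal (- lam * (\<integral>x. conj_minorant \<beta> (trunc_density \<beta> N) x \<partial>Q) - \<beta>)"
      by (rule lagrangian_trunc_density(2))
    finally show ?thesis .
  qed
  have "ereal (\<integral>x. - f 0 \<partial>Q) \<le> E"
    unfolding E_def by (rule integral_le_ext_integral) (use fenchel_young[of 0 _ f] in \<open>auto intro!: AE_I2\<close>)
  then have E_low: "ereal (- f 0) \<le> E" by (simp add: Q.prob_space)
  show ?thesis
  proof (cases ?I)
    case (real r)
    define K where "K = (- r - \<beta>) / lam"
    have "(\<integral>x. conj_minorant \<beta> (trunc_density \<beta> N) x \<partial>Q) \<le> K" for N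
      using I_le[of N] lam_pos unfolding real K_def by (simp add: field_simps)
    then have "E \<le> ereal K" unfolding E_def by (rule ext_integral_fconj_le)
    with E_low obtain e where e: "E = ereal e" "e \<le> K" by (cases E) auto
    then have "r \<le> - lam * e - \<beta>"
      using lam_pos unfolding K_def by (simp add: field_simps)
    then show ?thesis
      unfolding real dual_obj_def E_def[symmetric] e by simp
  qed (use I_le[of 0] in auto)
qed

lemma dual_obj_eq_INF_lagrangian:
  "dual_obj L f lam Q \<beta> = (INF g \<in> {g. g \<in> borel_measurable Q \<and> (\<forall>\<theta>\<in>space Q. g \<theta> \<ge> 0) \<and> integrable Q g}.
      lagrangian L f lam Q g \<beta>)"
  by (rule antisym[OF INF_greatest INF_lagrangian_le_dual_obj]) (auto intro: dual_obj_le_lagrangian)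

lemma dual_obj_eq_lagrangian_if_deriv:
  assumes g: "integrable Q g" and nonneg: "\<And>x. x \<in> space Q \<Longrightarrow> 0 \<le> g x"
    and crit: "AE x in Q. 0 < g x \<and> deriv f (g x) = - (\<beta> + L x) / lam"
  shows "dual_obj L f lam Q \<beta> = lagrangian L f lam Q g \<beta>"
proof -
  have conj_eq: "AE x in Q. fconj f (- (\<beta> + L x) / lam) = ereal (conj_minorant \<beta> g x)"
    using crit unfolding conj_minorant_def by eventually_elim (rule fconj_eq_at_deriv, auto)
  have low: "AE x in Q. - f 0 \<le> conj_minorant \<beta> g x"
    using conj_eq
  proof eventually_elim
    case (elim x)
    from fenchel_young[of 0 "- (\<beta> + L x) / lam" f] show ?case using elim by simp
  qed
  note terms = integrable_lagrangian_terms[OF g nonneg low]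
  have "ext_integral Q (\<lambda>x. fconj f (- (\<beta> + L x) / lam)) = ext_integral Q (\<lambda>x. ereal (conj_minorant \<beta> g x))"
    by (rule ext_integral_cong_AE[OF conj_eq])
  also have "\<dots> = ereal (\<integral>x. conj_minorant \<beta> g x \<partial>Q)"
    using ext_integral_ereal_bounded_below[where k = "\<lambda>_. - f 0", OF _ _ low]
      integral_conj_minorant(1)[OF g terms(2,1)] by auto
  moreover have "lagrangian L f lam Q g \<beta> = ereal (- lam * (\<integral>x. conj_minorant \<beta> g x \<partial>Q) - \<beta>)"
    using lagrangian_eq_conj_minorant[OF g nonneg, of \<beta>] terms by simp
  ultimately show ?thesis
    unfolding dual_obj_def by simp
qed

lemma lagrangian_cong_AE:
  assumes g1: "g1 \<in> borel_measurable Q" and g2: "g2 \<in> borel_measurable Q"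
    and eq: "AE x in Q. g1 x = g2 x"
  shows "lagrangian L f lam Q g1 \<beta> = lagrangian L f lam Q g2 \<beta>"
proof -
  have "ext_integral Q (\<lambda>x. ereal (L x * g1 x)) = ext_integral Q (\<lambda>x. ereal (L x * g2 x))"
    "ext_integral Q (\<lambda>x. ereal (f (g1 x))) = ext_integral Q (\<lambda>x. ereal (f (g2 x)))"
    by (rule ext_integral_cong_AE, use eq in auto)+
  moreover have "integral\<^sup>L Q g1 = integral\<^sup>L Q g2" by (rule integral_cong_AE[OF g1 g2 eq])
  ultimately show ?thesis unfolding lagrangian_def by simp
qed

lemma erm_fdr_obj_eq_lagrangian_RN_deriv:
  assumes P: "P \<in> abs_cont_probs Q"
  defines "r \<equiv> \<lambda>x. enn2real (RN_deriv Q P x)"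
  shows "integrable Q r" and "\<And>x. 0 \<le> r x" and "integral\<^sup>L Q r = 1"
    and "erm_fdr_obj L f lam Q P = lagrangian L f lam Q r \<beta>"
proof -
  from P have sets_P: "sets P = sets Q" and "prob_space P" and ac: "absolutely_continuous Q P"
    unfolding abs_cont_probs_def by auto
  then interpret P: prob_space P by simp
  have sf: "sigma_finite_measure P"
    using \<open>prob_space P\<close> prob_space_def finite_measure_def by blast
  show nonneg: "\<And>x. 0 \<le> r x" unfolding r_def by simp
  have "AE x in Q. RN_deriv Q P x \<noteq> \<infinity>" by (rule Q.RN_deriv_finite[OF sf ac sets_P])
  then have RN_eq: "AE x in Q. RN_deriv Q P x = ennreal (r x)"
    unfolding r_def by eventually_elim (auto simp: ennreal_enn2real_if)
  have "integrable P (\<lambda>_. 1::real)" by simp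
  then show "integrable Q r"
    using Q.RN_deriv_integrable[OF sf ac sets_P, of "\<lambda>_. 1"] unfolding r_def by simp
  have "integral\<^sup>L P (\<lambda>_. 1::real) = integral\<^sup>L Q r"
    using Q.RN_deriv_integral[OF sf ac sets_P, of "\<lambda>_. 1"] unfolding r_def by simp
  then show norm: "integral\<^sup>L Q r = 1" using P.prob_space by simp
  have "exp_risk L P = enn2ereal (\<integral>\<^sup>+ x. ennreal (L x) \<partial>P)"
    unfolding exp_risk_def by (rule ext_integral_nonneg) (rule L_nonneg)
  also have "(\<integral>\<^sup>+ x. ennreal (L x) \<partial>P) = (\<integral>\<^sup>+ x. RN_deriv Q P x * ennreal (L x) \<partial>Q)"
    by (rule Q.RN_deriv_nn_integral[OF ac sets_P]) (use L_meas in measurable)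
  also have "\<dots> = (\<integral>\<^sup>+ x. ennreal (L x * r x) \<partial>Q)"
    by (rule nn_integral_cong_AE)
       (use RN_eq in \<open>eventually_elim, auto simp: ennreal_mult'' L_nonneg nonneg mult.commute\<close>)
  also have "enn2ereal \<dots> = ext_integral Q (\<lambda>x. ereal (L x * r x))"
    by (rule ext_integral_nonneg[symmetric]) (simp add: L_nonneg nonneg)
  finally have "exp_risk L P = ext_integral Q (\<lambda>x. ereal (L x * r x))" .
  moreover have "f_div f P Q = ext_integral Q (\<lambda>x. ereal (f (r x)))"
    unfolding f_div_def r_def ..
  ultimately show "erm_fdr_obj L f lam Q P = lagrangian L f lam Q r \<beta>"
    unfolding erm_fdr_obj_def lagrangian_def norm by simp
qed

lemma erm_fdr_obj_density:
  assumes g: "integrable Q g" and nonneg: "\<And>x. 0 \<le> g x" and norm: "integral\<^sup>L Q g = 1"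
  shows "erm_fdr_obj L f lam Q (density Q (\<lambda>x. ennreal (g x))) = lagrangian L f lam Q g \<beta>"
proof -
  define P where "P = density Q (\<lambda>x. ennreal (g x))"
  have g_meas: "g \<in> borel_measurable Q" using g by auto
  have P: "P \<in> abs_cont_probs Q"
    unfolding P_def by (rule density_mem_abs_cont_probs[OF g nonneg norm])
  note RN = erm_fdr_obj_eq_lagrangian_RN_deriv[OF P]
  have "(\<lambda>x. ennreal (g x)) \<in> borel_measurable Q" using g_meas by measurable
  then have "AE x in Q. ennreal (g x) = RN_deriv Q P x"
    by (rule Q.RN_deriv_unique) (simp add: P_def)
  then have "AE x in Q. enn2real (RN_deriv Q P x) = g x"
  proof eventually_elim
    case (elim x)
    then have "enn2real (RN_deriv Q P x) = enn2real (ennreal (g x))" by simp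
    then show ?case using nonneg[of x] by simp
  qed
  then show ?thesis
    unfolding P_def[symmetric] RN(4)[of \<beta>]
    by (intro lagrangian_cong_AE) (use RN(1) g_meas in auto)
qed

theorem strong_duality:
  assumes g: "integrable Q g" and norm: "integral\<^sup>L Q g = 1"
    and crit: "AE x in Q. 0 < g x \<and> deriv f (g x) = - (\<beta> + L x) / lam"
  shows "\<exists>P\<in>abs_cont_probs Q.
      (\<forall>P'\<in>abs_cont_probs Q. erm_fdr_obj L f lam Q P \<le> erm_fdr_obj L f lam Q P')
    \<and> (\<forall>\<beta>'. dual_obj L f lam Q \<beta>' \<le> dual_obj L f lam Q \<beta>)
    \<and> erm_fdr_obj L f lam Q P = dual_obj L f lam Q \<beta>"
proof -
  define g' where "g' x = max 0 (g x)" for x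
  have g'_nonneg: "0 \<le> g' x" for x unfolding g'_def by simp
  have g'_meas: "g' \<in> borel_measurable Q" unfolding g'_def using g by measurable
  have g'_eq: "AE x in Q. g' x = g x" using crit by eventually_elim (auto simp: g'_def)
  have g'_int: "integrable Q g'" using integrable_cong_AE[OF g'_meas _ g'_eq] g by auto
  have g'_norm: "integral\<^sup>L Q g' = 1" using integral_cong_AE[OF g'_meas _ g'_eq] g norm by auto
  have g'_crit: "AE x in Q. 0 < g' x \<and> deriv f (g' x) = - (\<beta> + L x) / lam"
    using crit g'_eq by eventually_elim simp
  define P where "P = density Q (\<lambda>x. ennreal (g' x))"
  have P: "P \<in> abs_cont_probs Q"
    unfolding P_def by (rule density_mem_abs_cont_probs[OF g'_int g'_nonneg g'_norm])
  have erm_P: "erm_fdr_obj L f lam Q P = lagrangian L f lam Q g' \<beta>'" for \<beta>'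
    unfolding P_def by (rule erm_fdr_obj_density[OF g'_int g'_nonneg g'_norm])
  have opt: "erm_fdr_obj L f lam Q P = dual_obj L f lam Q \<beta>"
    using erm_P dual_obj_eq_lagrangian_if_deriv[OF g'_int _ g'_crit] g'_nonneg by simp
  show ?thesis
  proof (intro bexI[OF _ P] conjI ballI allI opt)
    fix P' assume "P' \<in> abs_cont_probs Q"
    note RN = erm_fdr_obj_eq_lagrangian_RN_deriv[OF this]
    have "dual_obj L f lam Q \<beta> \<le> lagrangian L f lam Q (\<lambda>x. enn2real (RN_deriv Q P' x)) \<beta>"
      by (rule dual_obj_le_lagrangian) (use RN in auto)
    then show "erm_fdr_obj L f lam Q P \<le> erm_fdr_obj L f lam Q P'"
      using RN(4) opt by simp
  next
    fix \<beta>'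
    have "dual_obj L f lam Q \<beta>' \<le> lagrangian L f lam Q g' \<beta>'"
      by (rule dual_obj_le_lagrangian) (use g'_int g'_nonneg in auto)
    then show "dual_obj L f lam Q \<beta>' \<le> dual_obj L f lam Q \<beta>"
      using erm_P[of \<beta>'] opt by simp
  qed
qed

end

theorem lemma1:
  fixes M :: "(real ^ 'd) set"
    and h :: "real ^ 'd \<Rightarrow> 'x \<Rightarrow> 'y"
    and loss :: "'y \<Rightarrow> 'y \<Rightarrow> real"
    and z :: "('x \<times> 'y) list"
    and Q :: "(real ^ 'd) measure"
    and f :: "real \<Rightarrow> real"
    and lam :: real
  assumes loss_nonneg: "\<And>y y'. loss y y' \<ge> 0"
    and loss_refl: "\<And>y. loss y y = 0"
    and Q_space: "space Q = M"
    and Q_sets: "sets Q = sets (restrict_space borel M)"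
    and Q_prob: "prob_space Q"
    and L_meas: "emp_risk h loss z \<in> borel_measurable Q"
    and lam_pos: "lam > 0"
    and f_convex: "convex_on {0..} f"
    and f_one: "f 1 = 0"
    and f_zero: "(f \<longlongrightarrow> f 0) (at_right 0)"
    and a_strict: "strictly_convex_on {0..} f"
    and a_diff: "\<And>x. x > 0 \<Longrightarrow> f differentiable (at x)"
    and b: "\<exists>\<beta>::real.
              (\<forall>\<theta>\<in>msupport Q.
                 - (\<beta> + emp_risk h loss z \<theta>) / lam \<in> deriv f ` {0<..} \<and>
                 the_inv_into {0<..} (deriv f) (- (\<beta> + emp_risk h loss z \<theta>) / lam) > 0)
            \<and> integrable Q (\<lambda>\<theta>. the_inv_into {0<..} (deriv f) (- (\<beta> + emp_risk h loss z \<theta>) / lam))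
            \<and> (\<integral>\<theta>. the_inv_into {0<..} (deriv f) (- (\<beta> + emp_risk h loss z \<theta>) / lam) \<partial>Q) = 1"
  shows "(\<forall>\<beta>. dual_obj (emp_risk h loss z) f lam Q \<beta> =
            (INF g \<in> {g. g \<in> borel_measurable Q \<and> (\<forall>\<theta>\<in>space Q. g \<theta> \<ge> 0) \<and> integrable Q g}.
               lagrangian (emp_risk h loss z) f lam Q g \<beta>))
       \<and> (\<exists>P\<in>abs_cont_probs Q. \<exists>\<beta>::real.
            (\<forall>P'\<in>abs_cont_probs Q.
               erm_fdr_obj (emp_risk h loss z) f lam Q P \<le> erm_fdr_obj (emp_risk h loss z) f lam Q P')
          \<and> (\<forall>\<beta>'. dual_obj (emp_risk h loss z) f lam Q \<beta>' \<le> dual_obj (emp_risk h loss z) f lam Q \<beta>)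
          \<and> erm_fdr_obj (emp_risk h loss z) f lam Q P = dual_obj (emp_risk h loss z) f lam Q \<beta>)"
proof -
  interpret erm_fdr f Q "emp_risk h loss z" lam
    by (intro erm_fdr.intro divergence_generator.intro erm_fdr_axioms.intro
        f_convex f_zero a_diff Q_prob L_meas lam_pos emp_risk_nonneg loss_nonneg)
  obtain \<beta> where supp: "\<forall>\<theta>\<in>msupport Q.
        - (\<beta> + emp_risk h loss z \<theta>) / lam \<in> deriv f ` {0<..} \<and>
        the_inv_into {0<..} (deriv f) (- (\<beta> + emp_risk h loss z \<theta>) / lam) > 0"
    and int: "integrable Q (\<lambda>\<theta>. the_inv_into {0<..} (deriv f) (- (\<beta> + emp_risk h loss z \<theta>) / lam))"
    and norm: "(\<integral>\<theta>. the_inv_into {0<..} (deriv f) (- (\<beta> + emp_risk h loss z \<theta>) / lam) \<partial>Q) = 1"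
    using b by blast
  have "AE \<theta> in Q. \<theta> \<in> msupport Q"
    by (rule AE_in_msupport) (simp add: Q_sets Q_space)
  then have "AE \<theta> in Q. 0 < the_inv_into {0<..} (deriv f) (- (\<beta> + emp_risk h loss z \<theta>) / lam) \<and>
      deriv f (the_inv_into {0<..} (deriv f) (- (\<beta> + emp_risk h loss z \<theta>) / lam)) =
        - (\<beta> + emp_risk h loss z \<theta>) / lam"
    by eventually_elim (use supp f_the_inv_into_f[OF inj_on_deriv[OF a_strict]] in auto)
  from strong_duality[OF int norm this] show ?thesis
    using dual_obj_eq_INF_lagrangian by blast
qed

end
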